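(* Let $0\le a<b\le1$ and let $B|_{[a,b]}$ be the Bernoulli channel with inputs restricted to $[a,b]$. For every $\lambda_1,\lambda_2>0$ with $\lambda_1+\lambda_2<1$, \[ \frac14\le\dot{C}_{\mathrm{DI}}(B|_{[a,b]})\le\limsup_{n\to\infty}\frac{1}{n\log n}\log N_{\mathrm{DI}}(n,\lambda_1,\lambda_2)\le\frac12, \] where $N_{\mathrm{DI}}$ refers to the channel $B|_{[a,b]}$.
   Context: The Bernoulli channel maps $x\in[0,1]$ to the distribution $B_x$ on $\{0,1\}$ with $B_x(1)=x$, $B_x(0)=1-x$; $B|_{[a,b]}$ is the same map with input set $[a,b]$. For $x^n$, $B_{x^n}(y^n)=\prod_iB_{x_i}(y_i)$. An $(n,N,\lambda_1,\lambda_2)$-DI code for $B|_{[a,b]}$ is a family $\{(u_j,\mathcal{E}_j):j\in[N]\}$, $u_j\in[a,b]^n$, $\mathcal{E}_j\subset\{0,1\}^n$, with $B_{u_j}(\mathcal{E}_j)\ge1-\lambda_1$ for all $j$ and $B_{u_j}(\mathcal{E}_k)\le\lambda_2$ for $j\ne k$; $N_{\mathrm{DI}}(n,\lambda_1,\lambda_2)$ is the largest such $N$. Logarithms base 2; $\dot{C}_{\mathrm{DI}}=\inf_{\lambda_1,\lambda_2>0}\liminf_{n\to\infty}\frac{1}{n\log n}\log N_{\mathrm{DI}}(n,\lambda_1,\lambda_2)$. *)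

theory Defs
  imports Complex_Main "HOL-Library.Extended_Real" "HOL-Library.Liminf_Limsup"
begin

definition bern_prob :: "real list \<Rightarrow> bool list \<Rightarrow> real" where
  "bern_prob xs ys = prod_list (map2 (\<lambda>x y. if y then x else 1 - x) xs ys)"

definition bern_set :: "real list \<Rightarrow> bool list set \<Rightarrow> real" where
  "bern_set xs E = (\<Sum>ys\<in>E. bern_prob xs ys)"

definition is_DI_code ::
  "real \<Rightarrow> real \<Rightarrow> nat \<Rightarrow> nat \<Rightarrow> real \<Rightarrow> real \<Rightarrow>
   (nat \<Rightarrow> real list) \<Rightarrow> (nat \<Rightarrow> bool list set) \<Rightarrow> bool" where
  "is_DI_code a b n N l1 l2 u E \<longleftrightarrow>
     (\<forall>j<N. length (u j) = n \<and> set (u j) \<subseteq> {a..b} \<and> E j \<subseteq> {ys. length ys = n}) \<and>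
     (\<forall>j<N. bern_set (u j) (E j) \<ge> 1 - l1) \<and>
     (\<forall>j<N. \<forall>k<N. j \<noteq> k \<longrightarrow> bern_set (u j) (E k) \<le> l2)"

text \<open>Largest code size (possibly infinite, hence extended real).\<close>
definition N_DI :: "real \<Rightarrow> real \<Rightarrow> nat \<Rightarrow> real \<Rightarrow> real \<Rightarrow> ereal" where
  "N_DI a b n l1 l2 = Sup {ereal (real N) | N. \<exists>u E. is_DI_code a b n N l1 l2 u E}"

definition DI_rate :: "real \<Rightarrow> real \<Rightarrow> real \<Rightarrow> real \<Rightarrow> nat \<Rightarrow> ereal" where
  "DI_rate a b l1 l2 n =
     (if N_DI a b n l1 l2 = \<infinity> then \<infinity>
      else ereal (log 2 (real_of_ereal (N_DI a b n l1 l2)) / (real n * log 2 (real n))))"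

definition C_DI_dot :: "real \<Rightarrow> real \<Rightarrow> ereal" where
  "C_DI_dot a b = (INF l1\<in>{0<..}. INF l2\<in>{0<..}. liminf (DI_rate a b l1 l2))"

end

theory Submission
  imports Defs "HOL-Analysis.Convex" "HOL-Real_Asymp.Real_Asymp"
begin

(* Converse: write a Bernoulli parameter as x = sin^2 t. The Bhattacharyya coefficient of two
   product distributions is then the product of the cosines of the angle differences, hence at
   least 1 - n e^2/2 if all angles differ by at most e, and the total variation distance is at
   most 2 e sqrt n. Two codewords of a DI code with l1 + l2 < 1 are farther apart than that, so
   they lie in different cells of an angular grid of mesh about (1 - l1 - l2) / sqrt n, and
   N <= (C sqrt n)^n, i.e. rate at most 1/2.

   Achievability: use words over q + 1 ~ n^(1/4) equally spaced points of [a, b], and accept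
   for u when the statistic sum_i y_i (1 - 2 u_i) is close to its mean. Under the input v its
   mean moves by |v - u|^2 + F v - F u, where F x = sum_i x_i (1 - x_i), and its variance is at
   most n/4, so Chebyshev separates codewords with |v - u|^2 >> sqrt n and |F v - F u| < sqrt n.
   Pigeonholing F into n + 1 buckets of width sqrt n and choosing greedily words at Hamming
   distance at least D ~ eps n keeps roughly (q + 1)^(n - D) codewords, i.e. rate (1 - 2 eps)/4. *)

section \<open>Product Bernoulli distributions\<close>

abbreviation words :: "nat \<Rightarrow> bool list set" where
  "words n \<equiv> {ys. length ys = n}"

lemma finite_words: "finite (words n)"
  using finite_lists_length_eq[of "UNIV :: bool set" n] by simp

lemma sum_words_Suc:
  "(\<Sum>ys\<in>words (Suc n). F ys) = (\<Sum>ys\<in>words n. F (True # ys) + F (False # ys))"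
proof -
  have "words (Suc n) = Cons True ` words n \<union> Cons False ` words n"
    by (auto simp: length_Suc_conv image_def)
  then have "(\<Sum>ys\<in>words (Suc n). F ys) = sum F (Cons True ` words n) + sum F (Cons False ` words n)"
    by (simp only:) (rule sum.union_disjoint; auto simp: finite_words)
  then show ?thesis
    by (simp add: sum.reindex sum.distrib)
qed

lemma bern_prob_Nil [simp]: "bern_prob [] ys = 1"
  by (simp add: bern_prob_def)

lemma bern_prob_Cons [simp]:
  "bern_prob (x # xs) (y # ys) = (if y then x else 1 - x) * bern_prob xs ys"
  by (simp add: bern_prob_def)

lemma bern_prob_nonneg: "set xs \<subseteq> {0..1} \<Longrightarrow> 0 \<le> bern_prob xs ys"
proof (induction xs arbitrary: ys)
  case (Cons x xs)
  then show ?case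
    by (cases ys) (auto simp: bern_prob_def)
qed simp

lemma nth_in_unit_interval: "set xs \<subseteq> {0..1} \<Longrightarrow> i < length xs \<Longrightarrow> 0 \<le> xs ! i \<and> xs ! i \<le> (1 :: real)"
  by (meson atLeastAtMost_iff nth_mem subsetD)

lemma sum_bern_prob: "length xs = n \<Longrightarrow> (\<Sum>ys\<in>words n. bern_prob xs ys) = 1"
proof (induction xs arbitrary: n)
  case (Cons x xs)
  then obtain m where "n = Suc m" "length xs = m"
    by auto
  with Cons.IH show ?case
    by (simp add: sum_words_Suc sum.distrib flip: sum_distrib_left)
qed simp

lemma bern_expectation_sum:
  assumes "length xs = n"
  shows "(\<Sum>ys\<in>words n. bern_prob xs ys * (\<Sum>i<n. f i (ys ! i)))
       = (\<Sum>i<n. xs ! i * f i True + (1 - xs ! i) * f i False)"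
  using assms
proof (induction xs arbitrary: n f)
  case (Cons x xs)
  then obtain m where n: "n = Suc m" and m: "length xs = m"
    by auto
  let ?S = "\<lambda>ys. \<Sum>i<m. f (Suc i) (ys ! i)"
  have "(\<Sum>ys\<in>words n. bern_prob (x # xs) ys * (\<Sum>i<n. f i (ys ! i)))
      = (\<Sum>ys\<in>words m. (x * f 0 True + (1 - x) * f 0 False) * bern_prob xs ys
                        + bern_prob xs ys * ?S ys)"
    unfolding n sum_words_Suc
    by (intro sum.cong) (auto simp del: sum.lessThan_Suc simp: sum.lessThan_Suc_shift algebra_simps)
  also have "\<dots> = x * f 0 True + (1 - x) * f 0 False
                 + (\<Sum>i<m. xs ! i * f (Suc i) True + (1 - xs ! i) * f (Suc i) False)"
    by (simp add: sum.distrib Cons.IH[OF m, of "\<lambda>i. f (Suc i)"] sum_bern_prob[OF m]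
        flip: sum_distrib_left)
  finally show ?case
    unfolding n by (simp del: sum.lessThan_Suc add: sum.lessThan_Suc_shift)
qed simp

lemma bern_second_moment_sum:
  assumes "length xs = n"
    and centred: "\<And>i. i < n \<Longrightarrow> xs ! i * f i True + (1 - xs ! i) * f i False = 0"
  shows "(\<Sum>ys\<in>words n. bern_prob xs ys * (\<Sum>i<n. f i (ys ! i))\<^sup>2)
       = (\<Sum>i<n. xs ! i * (f i True)\<^sup>2 + (1 - xs ! i) * (f i False)\<^sup>2)"
  using assms
proof (induction xs arbitrary: n f)
  case (Cons x xs)
  then obtain m where n: "n = Suc m" and m: "length xs = m"
    by auto
  have centred_tail: "\<And>i. i < m \<Longrightarrow> xs ! i * f (Suc i) True + (1 - xs ! i) * f (Suc i) False = 0"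
    and centred_head: "x * f 0 True + (1 - x) * f 0 False = 0"
    using Cons.prems(2)[of "Suc _"] Cons.prems(2)[of 0] n by auto
  let ?S = "\<lambda>ys. \<Sum>i<m. f (Suc i) (ys ! i)"
  have "(\<Sum>ys\<in>words n. bern_prob (x # xs) ys * (\<Sum>i<n. f i (ys ! i))\<^sup>2)
      = (\<Sum>ys\<in>words m. (x * (f 0 True)\<^sup>2 + (1 - x) * (f 0 False)\<^sup>2) * bern_prob xs ys
          + (2 * (x * f 0 True + (1 - x) * f 0 False)) * (bern_prob xs ys * ?S ys)
          + bern_prob xs ys * (?S ys)\<^sup>2)"
    unfolding n sum_words_Suc
    by (intro sum.cong)
      (auto simp del: sum.lessThan_Suc simp: sum.lessThan_Suc_shift algebra_simps power2_eq_square)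
  also have "\<dots> = x * (f 0 True)\<^sup>2 + (1 - x) * (f 0 False)\<^sup>2
                 + (\<Sum>i<m. xs ! i * (f (Suc i) True)\<^sup>2 + (1 - xs ! i) * (f (Suc i) False)\<^sup>2)"
    by (simp add: sum.distrib Cons.IH[OF m centred_tail] centred_head sum_bern_prob[OF m]
        flip: sum_distrib_left)
  finally show ?case
    unfolding n by (simp del: sum.lessThan_Suc add: sum.lessThan_Suc_shift)
qed simp

lemma bern_chebyshev:
  assumes len: "length xs = n" and unit: "set xs \<subseteq> {0..1}"
    and centred: "\<And>i. i < n \<Longrightarrow> xs ! i * f i True + (1 - xs ! i) * f i False = 0"
    and "\<tau> > 0" and A: "A \<subseteq> words n"
    and far: "\<And>ys. ys \<in> A \<Longrightarrow> \<tau> \<le> \<bar>\<Sum>i<n. f i (ys ! i)\<bar>"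
  shows "bern_set xs A \<le> (\<Sum>i<n. xs ! i * (f i True)\<^sup>2 + (1 - xs ! i) * (f i False)\<^sup>2) / \<tau>\<^sup>2"
proof -
  let ?S = "\<lambda>ys. \<Sum>i<n. f i (ys ! i)"
  have "bern_set xs A * \<tau>\<^sup>2 = (\<Sum>ys\<in>A. bern_prob xs ys * \<tau>\<^sup>2)"
    unfolding bern_set_def by (rule sum_distrib_right)
  also have "\<dots> \<le> (\<Sum>ys\<in>A. bern_prob xs ys * (?S ys)\<^sup>2)"
  proof (intro sum_mono mult_left_mono)
    fix ys assume "ys \<in> A"
    then show "\<tau>\<^sup>2 \<le> (?S ys)\<^sup>2"
      using far[of ys] \<open>\<tau> > 0\<close> by (metis abs_le_square_iff abs_of_pos)
  qed (simp add: bern_prob_nonneg[OF unit])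
  also have "\<dots> \<le> (\<Sum>ys\<in>words n. bern_prob xs ys * (?S ys)\<^sup>2)"
    by (rule sum_mono2[OF finite_words A]) (simp add: bern_prob_nonneg[OF unit])
  also have "\<dots> = (\<Sum>i<n. xs ! i * (f i True)\<^sup>2 + (1 - xs ! i) * (f i False)\<^sup>2)"
    by (rule bern_second_moment_sum[OF len centred])
  finally show ?thesis
    using \<open>\<tau> > 0\<close> by (simp add: pos_le_divide_eq)
qed

lemma sum_diff_le_bhattacharyya:
  fixes P Q :: "'a \<Rightarrow> real"
  assumes W: "finite W" and E: "E \<subseteq> W"
    and P: "\<And>w. 0 \<le> P w" and Q: "\<And>w. 0 \<le> Q w"
    and sum_P: "sum P W = 1" and sum_Q: "sum Q W = 1"
  shows "(\<Sum>w\<in>E. P w - Q w) \<le> 2 * sqrt (2 * (1 - (\<Sum>w\<in>W. sqrt (P w * Q w))))"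
proof -
  define BC where "BC = (\<Sum>w\<in>W. sqrt (P w * Q w))"
  let ?d = "\<lambda>w. \<bar>sqrt (P w) - sqrt (Q w)\<bar>" and ?s = "\<lambda>w. sqrt (P w) + sqrt (Q w)"
  have sum_d: "(\<Sum>w\<in>W. (?d w)\<^sup>2) = 2 - 2 * BC"
  proof -
    have "(\<Sum>w\<in>W. (?d w)\<^sup>2) = (\<Sum>w\<in>W. P w + Q w - 2 * sqrt (P w * Q w))"
      by (intro sum.cong) (auto simp: power2_diff P Q real_sqrt_mult)
    then show ?thesis
      by (simp add: sum.distrib sum_subtractf sum_P sum_Q BC_def sum_distrib_left)
  qed
  have sum_s: "(\<Sum>w\<in>W. (?s w)\<^sup>2) = 2 + 2 * BC"
  proof -
    have "(\<Sum>w\<in>W. (?s w)\<^sup>2) = (\<Sum>w\<in>W. P w + Q w + 2 * sqrt (P w * Q w))"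
      by (intro sum.cong) (auto simp: power2_sum P Q real_sqrt_mult)
    then show ?thesis
      by (simp add: sum.distrib sum_P sum_Q BC_def sum_distrib_left)
  qed
  have "(2 - 2 * BC) * (2 + 2 * BC) = 2 * (1 - BC) * 4 - 4 * (1 - BC)\<^sup>2"
    by (simp add: algebra_simps power2_eq_square)
  then have CS: "(\<Sum>w\<in>W. ?d w * ?s w)\<^sup>2 \<le> 2 * (1 - BC) * 4"
    using Cauchy_Schwarz_ineq_sum[of ?d ?s W] unfolding sum_d sum_s
    by (smt (verit) zero_le_power2)
  have "(\<Sum>w\<in>E. P w - Q w) \<le> (\<Sum>w\<in>E. ?d w * ?s w)"
  proof (rule sum_mono)
    fix w
    have "P w - Q w = (sqrt (P w) - sqrt (Q w)) * ?s w"
      using P[of w] Q[of w] by (simp add: algebra_simps)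
    then show "P w - Q w \<le> ?d w * ?s w"
      using P[of w] Q[of w] by (simp add: abs_mult_pos mult_right_mono)
  qed
  also have "\<dots> \<le> (\<Sum>w\<in>W. ?d w * ?s w)"
    using P Q by (intro sum_mono2[OF W E]) auto
  also have "\<dots> \<le> sqrt (2 * (1 - BC) * 4)"
    using CS by (rule real_le_rsqrt)
  also have "\<dots> = sqrt (2 * (1 - BC)) * sqrt 4"
    by (simp only: real_sqrt_mult)
  also have "\<dots> = 2 * sqrt (2 * (1 - BC))"
    by simp
  finally show ?thesis
    unfolding BC_def .
qed

lemma bern_set_diff_le_bhattacharyya:
  assumes "length xs = n" "length zs = n" "set xs \<subseteq> {0..1}" "set zs \<subseteq> {0..1}"
    and "E \<subseteq> words n"
  shows "bern_set xs E - bern_set zs E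
      \<le> 2 * sqrt (2 * (1 - (\<Sum>ys\<in>words n. sqrt (bern_prob xs ys * bern_prob zs ys))))"
  using sum_diff_le_bhattacharyya[OF finite_words, where E = E and P = "bern_prob xs" and Q = "bern_prob zs"] assms
  by (simp add: bern_set_def sum_subtractf bern_prob_nonneg sum_bern_prob)

lemma bern_bhattacharyya_prod:
  assumes "length xs = n" "length zs = n"
  shows "(\<Sum>ys\<in>words n. sqrt (bern_prob xs ys * bern_prob zs ys))
       = (\<Prod>i<n. sqrt (xs ! i * zs ! i) + sqrt ((1 - xs ! i) * (1 - zs ! i)))"
  using assms
proof (induction xs arbitrary: n zs)
  case (Cons x xs)
  then obtain m z zs' where n: "n = Suc m" and m: "length xs = m" "length zs' = m"
    and zs: "zs = z # zs'"
    by (cases zs) auto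
  have sqrt_prod: "sqrt ((p * P) * (r * R)) = sqrt (p * r) * sqrt (P * R)" for p P r R :: real
    by (simp add: real_sqrt_mult[symmetric] ac_simps)
  have "(\<Sum>ys\<in>words n. sqrt (bern_prob (x # xs) ys * bern_prob zs ys))
      = (sqrt (x * z) + sqrt ((1 - x) * (1 - z))) * (\<Sum>ys\<in>words m. sqrt (bern_prob xs ys * bern_prob zs' ys))"
    unfolding n zs sum_words_Suc
    by (simp only: bern_prob_Cons if_True if_False sqrt_prod sum.distrib sum_distrib_left
        distrib_right)
  then show ?case
    unfolding n zs Cons.IH[OF m] by (simp del: prod.lessThan_Suc add: prod.lessThan_Suc_shift)
qed simp

definition bern_angle :: "real \<Rightarrow> real" where
  "bern_angle x = arcsin (sqrt x)"

lemma bern_angle_bounds: "0 \<le> x \<Longrightarrow> x \<le> 1 \<Longrightarrow> 0 \<le> bern_angle x \<and> bern_angle x \<le> pi / 2"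
  unfolding bern_angle_def
  using arcsin_le_mono[of 0 "sqrt x"] arcsin_le_mono[of "sqrt x" 1] by simp

lemma bern_bhattacharyya_eq_cos:
  assumes "0 \<le> x" "x \<le> 1" "0 \<le> z" "z \<le> 1"
  shows "sqrt (x * z) + sqrt ((1 - x) * (1 - z)) = cos (bern_angle x - bern_angle z)"
proof -
  have "sin (bern_angle y) = sqrt y \<and> cos (bern_angle y) = sqrt (1 - y)"
    if "0 \<le> y" "y \<le> 1" for y
  proof -
    have "0 \<le> sqrt y" "sqrt y \<le> 1"
      using that by auto
    then have "- 1 \<le> sqrt y" "sqrt y \<le> 1"
      by linarith+
    then show ?thesis
      using that by (simp add: bern_angle_def sin_arcsin cos_arcsin)
  qed
  then show ?thesis
    using assms by (simp add: cos_diff real_sqrt_mult)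
qed

lemma cos_ge_one_minus_half_square: "1 - y\<^sup>2 / 2 \<le> cos (y :: real)"
proof -
  have "sin (y / 2) ^ 2 \<le> (y / 2) ^ 2"
    using abs_sin_x_le_abs_x[of "y / 2"] by (metis abs_le_square_iff)
  then show ?thesis
    using cos_double_sin[of "y / 2"] by (simp add: power_divide)
qed

lemma bern_bhattacharyya_ge:
  assumes len: "length xs = n" "length zs = n" and unit: "set xs \<subseteq> {0..1}" "set zs \<subseteq> {0..1}"
    and close: "\<And>i. i < n \<Longrightarrow> \<bar>bern_angle (xs ! i) - bern_angle (zs ! i)\<bar> \<le> e"
    and "0 \<le> e" "e \<le> 1"
  shows "1 - n * e\<^sup>2 / 2 \<le> (\<Sum>ys\<in>words n. sqrt (bern_prob xs ys * bern_prob zs ys))"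
proof -
  have e2: "e\<^sup>2 \<le> 1"
    using \<open>0 \<le> e\<close> \<open>e \<le> 1\<close> by (simp add: power_le_one)
  have "1 - n * e\<^sup>2 / 2 \<le> (1 - e\<^sup>2 / 2) ^ n"
    using Bernoulli_inequality[of "- (e\<^sup>2 / 2)" n] e2 by simp
  also have "\<dots> = (\<Prod>i<n. 1 - e\<^sup>2 / 2)"
    by simp
  also have "\<dots> \<le> (\<Prod>i<n. sqrt (xs ! i * zs ! i) + sqrt ((1 - xs ! i) * (1 - zs ! i)))"
  proof (intro prod_mono conjI)
    fix i assume "i \<in> {..<n}"
    then have "xs ! i \<in> {0..1}" "zs ! i \<in> {0..1}"
      using len nth_in_unit_interval[OF unit(1)] nth_in_unit_interval[OF unit(2)] by auto
    moreover have "(bern_angle (xs ! i) - bern_angle (zs ! i))\<^sup>2 \<le> e\<^sup>2"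
      using close[of i] \<open>i \<in> {..<n}\<close> \<open>0 \<le> e\<close> by (metis abs_le_square_iff abs_of_nonneg lessThan_iff)
    ultimately show "1 - e\<^sup>2 / 2 \<le> sqrt (xs ! i * zs ! i) + sqrt ((1 - xs ! i) * (1 - zs ! i))"
      using cos_ge_one_minus_half_square[of "bern_angle (xs ! i) - bern_angle (zs ! i)"]
      by (simp add: bern_bhattacharyya_eq_cos)
  qed (use e2 in simp)
  also have "\<dots> = (\<Sum>ys\<in>words n. sqrt (bern_prob xs ys * bern_prob zs ys))"
    using bern_bhattacharyya_prod[OF len] by simp
  finally show ?thesis .
qed

section \<open>The converse bound\<close>

lemma nat_floor_divide_eq_imp_dist_less:
  fixes x y s :: real
  assumes "nat \<lfloor>x / s\<rfloor> = nat \<lfloor>y / s\<rfloor>" and "0 \<le> x" "0 \<le> y" "0 < s"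
  shows "\<bar>x - y\<bar> < s"
proof -
  have "\<lfloor>x / s\<rfloor> = \<lfloor>y / s\<rfloor>"
    using assms by (simp add: eq_nat_nat_iff)
  then have "\<bar>x / s - y / s\<bar> < 1"
    using floor_correct[of "x / s"] floor_correct[of "y / s"] by linarith
  moreover have "x - y = s * (x / s - y / s)"
    using \<open>0 < s\<close> by (simp add: field_simps)
  then have "\<bar>x - y\<bar> = s * \<bar>x / s - y / s\<bar>"
    using \<open>0 < s\<close> by (simp add: abs_mult)
  ultimately show ?thesis
    using \<open>0 < s\<close> by simp
qed

lemma DI_codeD:
  assumes "is_DI_code a b n N l1 l2 u E" and "0 \<le> a" "b \<le> 1" and "j < N"
  shows "length (u j) = n" "set (u j) \<subseteq> {0..1}" "E j \<subseteq> words n"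
    and "1 - l1 \<le> bern_set (u j) (E j)"
proof -
  have "length (u j) = n \<and> set (u j) \<subseteq> {a..b} \<and> E j \<subseteq> words n"
    and "1 - l1 \<le> bern_set (u j) (E j)"
    using assms(1,4) by (simp_all add: is_DI_code_def)
  moreover have "{a..b} \<subseteq> {0..1 :: real}"
    using assms(2,3) by simp
  ultimately show "length (u j) = n" "set (u j) \<subseteq> {0..1}" "E j \<subseteq> words n"
    "1 - l1 \<le> bern_set (u j) (E j)"
    by auto
qed

lemma DI_code_angles_not_close:
  assumes code: "is_DI_code a b n N l1 l2 u E" and ab: "0 \<le> a" "b \<le> 1"
    and jk: "j < N" "k < N" "j \<noteq> k" and e: "0 \<le> e" "e \<le> 1"
    and close: "\<And>i. i < n \<Longrightarrow> \<bar>bern_angle (u j ! i) - bern_angle (u k ! i)\<bar> \<le> e"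
  shows "1 - l1 - l2 \<le> 2 * e * sqrt n"
proof -
  let ?BC = "\<Sum>ys\<in>words n. sqrt (bern_prob (u j) ys * bern_prob (u k) ys)"
  have "bern_set (u k) (E j) \<le> l2"
    using code jk by (simp add: is_DI_code_def)
  then have "1 - l1 - l2 \<le> bern_set (u j) (E j) - bern_set (u k) (E j)"
    using DI_codeD(4)[OF code ab jk(1)] by linarith
  also have "\<dots> \<le> 2 * sqrt (2 * (1 - ?BC))"
    using DI_codeD[OF code ab jk(1)] DI_codeD[OF code ab jk(2)]
    by (intro bern_set_diff_le_bhattacharyya) auto
  also have "\<dots> \<le> 2 * sqrt (n * e\<^sup>2)"
    using bern_bhattacharyya_ge[OF _ _ _ _ close e] DI_codeD[OF code ab jk(1)]
      DI_codeD[OF code ab jk(2)]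
    by simp
  also have "\<dots> = 2 * e * sqrt n"
    using e by (simp add: real_sqrt_mult)
  finally show ?thesis .
qed

lemma DI_code_angle_cells_inj:
  assumes code: "is_DI_code a b n N l1 l2 u E" and ab: "0 \<le> a" "b \<le> 1"
    and e: "0 < e" "e \<le> 1" and small: "2 * e * sqrt n < 1 - l1 - l2"
  shows "inj_on (\<lambda>j. map (\<lambda>x. nat \<lfloor>bern_angle x / e\<rfloor>) (u j)) {..<N}"
proof (rule inj_onI, rule ccontr)
  fix j k
  assume "j \<in> {..<N}" "k \<in> {..<N}" "j \<noteq> k"
    and cells: "map (\<lambda>x. nat \<lfloor>bern_angle x / e\<rfloor>) (u j) = map (\<lambda>x. nat \<lfloor>bern_angle x / e\<rfloor>) (u k)"
  then have jk: "j < N" "k < N"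
    by simp_all
  have "\<bar>bern_angle (u j ! i) - bern_angle (u k ! i)\<bar> \<le> e" if "i < n" for i
  proof -
    have "nat \<lfloor>bern_angle (u j ! i) / e\<rfloor> = nat \<lfloor>bern_angle (u k ! i) / e\<rfloor>"
      using arg_cong[OF cells, of "\<lambda>ws. ws ! i"] that DI_codeD(1)[OF code ab] jk by simp
    moreover have "u j ! i \<in> {0..1}" "u k ! i \<in> {0..1}"
      using that nth_in_unit_interval DI_codeD(1,2)[OF code ab] jk by simp_all
    ultimately have "\<bar>bern_angle (u j ! i) - bern_angle (u k ! i)\<bar> < e"
      using bern_angle_bounds \<open>0 < e\<close> by (intro nat_floor_divide_eq_imp_dist_less) auto
    then show ?thesis
      by simp
  qed
  then have "1 - l1 - l2 \<le> 2 * e * sqrt n"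
    using DI_code_angles_not_close[OF code ab jk \<open>j \<noteq> k\<close> less_imp_le[OF \<open>0 < e\<close>] \<open>e \<le> 1\<close>]
    by blast
  with small show False
    by simp
qed

lemma DI_code_size_le:
  assumes code: "is_DI_code a b n N l1 l2 u E" and ab: "0 \<le> a" "b \<le> 1"
    and l: "0 < l1" "0 < l2" "l1 + l2 < 1" and "1 \<le> n"
  shows "real N \<le> (2 * pi * sqrt n / (1 - l1 - l2) + 1) ^ n"
proof -
  define d where "d = 1 - l1 - l2"
  define e where "e = d / (4 * sqrt n)"
  define M where "M = nat \<lfloor>(pi / 2) / e\<rfloor>"
  define cell where "cell j = map (\<lambda>x. nat \<lfloor>bern_angle x / e\<rfloor>) (u j)" for j
  have "1 \<le> sqrt n" "0 < d" "d \<le> 1"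
    using \<open>1 \<le> n\<close> l by (auto simp: d_def)
  then have "d \<le> 4 * sqrt n"
    by linarith
  then have e: "0 < e" "e \<le> 1" "2 * e * sqrt n < 1 - l1 - l2"
    using \<open>0 < d\<close> \<open>1 \<le> sqrt n\<close> unfolding e_def d_def[symmetric] by simp_all
  have "inj_on cell {..<N}"
    unfolding cell_def using DI_code_angle_cells_inj[OF code ab e] .
  moreover have "cell ` {..<N} \<subseteq> {ws. set ws \<subseteq> {0..M} \<and> length ws = n}"
  proof (clarsimp simp: cell_def DI_codeD(1)[OF code ab])
    fix j x assume "j < N" "x \<in> set (u j)"
    then have "x \<in> {0..1}"
      using DI_codeD(2)[OF code ab] by blast
    then have "bern_angle x \<le> pi / 2"
      using bern_angle_bounds by simp
    then have "bern_angle x / e \<le> (pi / 2) / e"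
      using e by (intro divide_right_mono) auto
    then show "nat \<lfloor>bern_angle x / e\<rfloor> \<le> M"
      unfolding M_def by (intro nat_mono floor_mono)
  qed
  ultimately have "card {..<N} \<le> card {ws. set ws \<subseteq> {0..M} \<and> length ws = n}"
    by (rule card_inj_on_le) (simp add: finite_lists_length_eq)
  then have "N \<le> (M + 1) ^ n"
    by (simp add: card_lists_length_eq)
  then have "real N \<le> real ((M + 1) ^ n)"
    by (simp only: of_nat_le_iff)
  also have "\<dots> = (real M + 1) ^ n"
    by (simp add: add.commute)
  also have "\<dots> \<le> (2 * pi * sqrt n / d + 1) ^ n"
  proof (intro power_mono add_right_mono)
    have "real M = of_int \<lfloor>(pi / 2) / e\<rfloor>"
      using e by (simp add: M_def)
    also have "\<dots> \<le> (pi / 2) / e"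
      by (rule of_int_floor_le)
    also have "\<dots> = 2 * pi * sqrt n / d"
      using \<open>0 < d\<close> by (simp add: e_def field_simps)
    finally show "real M \<le> 2 * pi * sqrt n / d" .
  qed simp
  finally show ?thesis
    by (simp add: d_def)
qed

lemma code_size_le_N_DI: "is_DI_code a b n N l1 l2 u E \<Longrightarrow> ereal (real N) \<le> N_DI a b n l1 l2"
  unfolding N_DI_def by (rule Sup_upper) blast

lemma N_DI_nonneg: "0 \<le> N_DI a b n l1 l2"
  using code_size_le_N_DI[of a b n 0 l1 l2 "\<lambda>_. []" "\<lambda>_. {}"] by (simp add: is_DI_code_def zero_ereal_def)

lemma N_DI_le:
  assumes "0 \<le> a" "b \<le> 1" "0 < l1" "0 < l2" "l1 + l2 < 1" "1 \<le> n"
  shows "N_DI a b n l1 l2 \<le> ereal ((2 * pi * sqrt n / (1 - l1 - l2) + 1) ^ n)"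
  unfolding N_DI_def
proof (rule Sup_least, safe)
  fix N u E
  assume "is_DI_code a b n N l1 l2 u E"
  then show "ereal (real N) \<le> ereal ((2 * pi * sqrt n / (1 - l1 - l2) + 1) ^ n)"
    using DI_code_size_le[OF _ assms] by simp
qed

lemma DI_rate_eq_ln:
  assumes "N_DI a b n l1 l2 = ereal r"
  shows "DI_rate a b l1 l2 n = ereal (ln r / (n * ln n))"
  using assms by (simp add: DI_rate_def log_def)

lemma DI_rate_le:
  assumes "2 \<le> n" and N: "N_DI a b n l1 l2 \<le> ereal B" and "1 \<le> B"
  shows "DI_rate a b l1 l2 n \<le> ereal (ln B / (n * ln n))"
proof -
  obtain r where r: "N_DI a b n l1 l2 = ereal r" "0 \<le> r" "r \<le> B"
    using N N_DI_nonneg[of a b n l1 l2] by (cases "N_DI a b n l1 l2") auto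
  have "ln r \<le> ln B" \<comment> \<open>for r = 0 this is the junk value ln 0 = 0, which DI_rate inherits\<close>
    using r \<open>1 \<le> B\<close> by (cases "r = 0") auto
  moreover have "0 < n * ln n"
    using \<open>2 \<le> n\<close> by simp
  ultimately show ?thesis
    by (simp add: DI_rate_eq_ln[OF r(1)] divide_right_mono)
qed

lemma DI_rate_ge:
  assumes "2 \<le> n" and N: "ereal M \<le> N_DI a b n l1 l2" and "1 \<le> M"
  shows "ereal (ln M / (n * ln n)) \<le> DI_rate a b l1 l2 n"
proof (cases "N_DI a b n l1 l2")
  case (real r)
  then have "ln M \<le> ln r"
    using N \<open>1 \<le> M\<close> by simp
  moreover have "0 < n * ln n"
    using \<open>2 \<le> n\<close> by simp
  ultimately show ?thesis
    by (simp add: DI_rate_eq_ln[OF real] divide_right_mono)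
qed (use N in \<open>auto simp: DI_rate_def\<close>)

lemma limsup_DI_rate_le:
  assumes "0 \<le> a" "b \<le> 1" "0 < l1" "0 < l2" "l1 + l2 < 1"
  shows "limsup (DI_rate a b l1 l2) \<le> ereal (1 / 2)"
proof -
  define d where "d = 1 - l1 - l2"
  have "0 < d"
    using assms by (simp add: d_def)
  have "eventually (\<lambda>n. DI_rate a b l1 l2 n \<le> ereal (ln (2 * pi * sqrt n / d + 1) / ln n))
          sequentially"
    using eventually_ge_at_top[of 2]
  proof eventually_elim
    case (elim n)
    let ?x = "2 * pi * sqrt n / d + 1"
    have "1 \<le> ?x"
      using \<open>0 < d\<close> by simp
    then have "DI_rate a b l1 l2 n \<le> ereal (ln (?x ^ n) / (n * ln n))"
      using DI_rate_le[OF elim N_DI_le[OF assms]] elim by (simp add: d_def)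
    also have "ln (?x ^ n) / (n * ln n) = ln ?x / ln n"
      using \<open>1 \<le> ?x\<close> elim by (simp add: ln_realpow)
    finally show ?case .
  qed
  then have "limsup (DI_rate a b l1 l2)
      \<le> limsup (\<lambda>n. ereal (ln (2 * pi * sqrt n / d + 1) / ln n))"
    by (rule Limsup_mono)
  also have "\<dots> = ereal (1 / 2)"
    using \<open>0 < d\<close> by (intro lim_imp_Limsup) (simp_all, real_asymp)
  finally show ?thesis .
qed

section \<open>Distance decoding\<close>

(* Since ys_i^2 = ys_i, score u ys = |ys - u|^2 - |u|^2: decoding is by distance to the codeword. *)
definition score :: "real list \<Rightarrow> bool list \<Rightarrow> real" where
  "score u ys = (\<Sum>i<length u. if ys ! i then 1 - 2 * u ! i else 0)"

definition mean_score :: "real list \<Rightarrow> real list \<Rightarrow> real" where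
  "mean_score u v = (\<Sum>i<length u. v ! i * (1 - 2 * u ! i))"

definition bern_variance :: "real list \<Rightarrow> real" where
  "bern_variance x = (\<Sum>i<length x. x ! i * (1 - x ! i))"

definition decoding_set :: "real list \<Rightarrow> real \<Rightarrow> bool list set" where
  "decoding_set u \<tau> = {ys. length ys = length u \<and> \<bar>score u ys - mean_score u u\<bar> < \<tau>}"

lemma bern_set_score_far_le:
  assumes lu: "length u = n" and lv: "length v = n"
    and u: "set u \<subseteq> {0..1}" and v: "set v \<subseteq> {0..1}"
    and "0 < \<tau>" and "A \<subseteq> words n"
    and far: "\<And>ys. ys \<in> A \<Longrightarrow> \<tau> \<le> \<bar>score u ys - mean_score u v\<bar>"
  shows "bern_set v A \<le> n / (4 * \<tau>\<^sup>2)"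
proof -
  define f where "f i y = (if y then 1 - 2 * u ! i else 0) - v ! i * (1 - 2 * u ! i)" for i y
  have f_sum: "(\<Sum>i<n. f i (ys ! i)) = score u ys - mean_score u v" for ys
    unfolding f_def score_def mean_score_def lu by (simp add: sum_subtractf)
  have "\<And>i. v ! i * f i True + (1 - v ! i) * f i False = 0"
    by (simp add: f_def algebra_simps)
  then have "bern_set v A \<le> (\<Sum>i<n. v ! i * (f i True)\<^sup>2 + (1 - v ! i) * (f i False)\<^sup>2) / \<tau>\<^sup>2"
    using \<open>0 < \<tau>\<close> \<open>A \<subseteq> words n\<close> by (rule bern_chebyshev[OF lv v]) (simp add: f_sum far)
  also have "\<dots> \<le> (\<Sum>i<n. 1 / 4) / \<tau>\<^sup>2"
  proof (intro divide_right_mono sum_mono)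
    fix i assume "i \<in> {..<n}"
    then have "0 \<le> u ! i" "u ! i \<le> 1" "0 \<le> v ! i" "v ! i \<le> 1"
      using nth_in_unit_interval[OF u] nth_in_unit_interval[OF v] lu lv by auto
    have "(1 - 2 * u ! i)\<^sup>2 = 1 - 4 * (u ! i * (1 - u ! i))"
      by (simp add: power2_eq_square algebra_simps)
    then have "(1 - 2 * u ! i)\<^sup>2 \<le> 1"
      using \<open>0 \<le> u ! i\<close> \<open>u ! i \<le> 1\<close> by simp
    then have "v ! i * (1 - v ! i) * (1 - 2 * u ! i)\<^sup>2 \<le> v ! i * (1 - v ! i)"
      using \<open>0 \<le> v ! i\<close> \<open>v ! i \<le> 1\<close> mult_left_mono[of _ 1 "v ! i * (1 - v ! i)"] by simp
    also have "\<dots> = 1 / 4 - (v ! i - 1 / 2)\<^sup>2"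
      by (simp add: power2_eq_square algebra_simps)
    also have "\<dots> \<le> 1 / 4"
      by simp
    finally show "v ! i * (f i True)\<^sup>2 + (1 - v ! i) * (f i False)\<^sup>2 \<le> 1 / 4"
      by (simp add: f_def power2_eq_square algebra_simps)
  qed simp
  finally show ?thesis
    by simp
qed

lemma bern_set_decoding_set_ge:
  assumes "length u = n" "set u \<subseteq> {0..1}" "0 < \<tau>"
  shows "1 - n / (4 * \<tau>\<^sup>2) \<le> bern_set u (decoding_set u \<tau>)"
proof -
  have D: "decoding_set u \<tau> \<subseteq> words n"
    using assms by (auto simp: decoding_set_def)
  have "bern_set u (words n - decoding_set u \<tau>) \<le> n / (4 * \<tau>\<^sup>2)"
    using assms by (intro bern_set_score_far_le) (auto simp: decoding_set_def)
  moreover have "bern_set u (words n - decoding_set u \<tau>) + bern_set u (decoding_set u \<tau>) = 1"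
    using sum.subset_diff[OF D finite_words, of "bern_prob u"] sum_bern_prob[OF assms(1)]
    by (simp add: bern_set_def)
  ultimately show ?thesis
    by linarith
qed

lemma mean_score_diff:
  assumes "length v = length u"
  shows "mean_score u v - mean_score u u
       = (\<Sum>i<length u. (v ! i - u ! i)\<^sup>2) + bern_variance v - bern_variance u"
  using assms unfolding mean_score_def bern_variance_def
  by (simp add: sum_subtractf[symmetric] sum.distrib[symmetric] power2_eq_square algebra_simps)

lemma bern_variance_bounds:
  assumes "set x \<subseteq> {0..1}"
  shows "0 \<le> bern_variance x \<and> bern_variance x \<le> length x"
proof -
  have "0 \<le> x ! i * (1 - x ! i) \<and> x ! i * (1 - x ! i) \<le> 1" if "i < length x" for i
    using nth_in_unit_interval[OF assms that] by (simp add: mult_le_one)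
  then show ?thesis
    using sum_mono[of "{..<length x}" "\<lambda>i. x ! i * (1 - x ! i)" "\<lambda>_. 1"]
    by (auto simp: bern_variance_def intro: sum_nonneg)
qed

lemma bern_set_decoding_set_other_le:
  assumes lu: "length u = n" and lv: "length v = n" and "set u \<subseteq> {0..1}" "set v \<subseteq> {0..1}"
    and "0 < \<tau>\<^sub>1" "0 < \<tau>\<^sub>2"
    and variance: "\<bar>bern_variance v - bern_variance u\<bar> < sqrt n"
    and dist: "\<tau>\<^sub>1 + \<tau>\<^sub>2 + sqrt n \<le> (\<Sum>i<n. (v ! i - u ! i)\<^sup>2)"
  shows "bern_set v (decoding_set u \<tau>\<^sub>1) \<le> n / (4 * \<tau>\<^sub>2\<^sup>2)"
proof (rule bern_set_score_far_le[OF assms(1-4,6)])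
  show "decoding_set u \<tau>\<^sub>1 \<subseteq> words n"
    using lu by (auto simp: decoding_set_def)
  have "\<tau>\<^sub>1 + \<tau>\<^sub>2 \<le> mean_score u v - mean_score u u"
    using mean_score_diff[of v u] lu lv variance dist by (simp add: abs_less_iff)
  moreover fix ys assume "ys \<in> decoding_set u \<tau>\<^sub>1"
  ultimately show "\<tau>\<^sub>2 \<le> \<bar>score u ys - mean_score u v\<bar>"
    by (auto simp: decoding_set_def abs_le_iff abs_less_iff)
qed

lemma DI_code_of_separated_family:
  fixes c :: "'i \<Rightarrow> real list"
  assumes "finite I" and "1 \<le> n" and l: "0 < l1" "0 < l2" and ab: "0 \<le> a" "b \<le> 1"
    and c: "\<And>i. i \<in> I \<Longrightarrow> length (c i) = n \<and> set (c i) \<subseteq> {a..b}"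
    and variance: "\<And>i j. i \<in> I \<Longrightarrow> j \<in> I \<Longrightarrow> \<bar>bern_variance (c i) - bern_variance (c j)\<bar> < sqrt n"
    and dist: "\<And>i j. i \<in> I \<Longrightarrow> j \<in> I \<Longrightarrow> i \<noteq> j \<Longrightarrow>
      (1 + 1 / (2 * sqrt l1) + 1 / (2 * sqrt l2)) * sqrt n \<le> (\<Sum>k<n. (c i ! k - c j ! k)\<^sup>2)"
  shows "\<exists>u E. is_DI_code a b n (card I) l1 l2 u E"
proof -
  obtain \<phi> where "bij_betw \<phi> {0..<card I} I"
    using ex_bij_betw_nat_finite[OF \<open>finite I\<close>] by blast
  then have \<phi>_inj: "inj_on \<phi> {..<card I}" and \<phi>_img: "\<And>j. j < card I \<Longrightarrow> \<phi> j \<in> I"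
    by (auto simp: bij_betw_def atLeast0LessThan)
  define \<tau>\<^sub>1 where "\<tau>\<^sub>1 = sqrt n / (2 * sqrt l1)"
  define \<tau>\<^sub>2 where "\<tau>\<^sub>2 = sqrt n / (2 * sqrt l2)"
  define u where "u j = c (\<phi> j)" for j
  have \<tau>: "0 < \<tau>\<^sub>1" "0 < \<tau>\<^sub>2" "n / (4 * \<tau>\<^sub>1\<^sup>2) = l1" "n / (4 * \<tau>\<^sub>2\<^sup>2) = l2"
    using l \<open>1 \<le> n\<close> by (simp_all add: \<tau>\<^sub>1_def \<tau>\<^sub>2_def power_divide power_mult_distrib)
  have \<tau>_sum: "\<tau>\<^sub>1 + \<tau>\<^sub>2 + sqrt n = (1 + 1 / (2 * sqrt l1) + 1 / (2 * sqrt l2)) * sqrt n"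
    by (simp add: \<tau>\<^sub>1_def \<tau>\<^sub>2_def distrib_right)
  have u: "length (u j) = n" "set (u j) \<subseteq> {a..b}" "set (u j) \<subseteq> {0..1}" if "j < card I" for j
  proof -
    from \<phi>_img[OF that] show "length (u j) = n" and ab_set: "set (u j) \<subseteq> {a..b}"
      using c by (simp_all add: u_def)
    have "{a..b} \<subseteq> {0..1 :: real}"
      using ab by simp
    with ab_set show "set (u j) \<subseteq> {0..1}"
      by (rule subset_trans)
  qed
  have "is_DI_code a b n (card I) l1 l2 u (\<lambda>j. decoding_set (u j) \<tau>\<^sub>1)"
    unfolding is_DI_code_def
  proof (intro conjI allI impI)
    fix j assume "j < card I"
    then show "length (u j) = n" "set (u j) \<subseteq> {a..b}" "decoding_set (u j) \<tau>\<^sub>1 \<subseteq> words n"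
      using u[OF \<open>j < card I\<close>] by (auto simp: decoding_set_def)
    show "1 - l1 \<le> bern_set (u j) (decoding_set (u j) \<tau>\<^sub>1)"
      using bern_set_decoding_set_ge[OF u(1,3)[OF \<open>j < card I\<close>] \<tau>(1)] \<tau>(3) by simp
  next
    fix j k assume jk: "j < card I" "k < card I" "j \<noteq> k"
    then have "\<phi> j \<in> I" "\<phi> k \<in> I" "\<phi> j \<noteq> \<phi> k"
      using \<phi>_img inj_on_eq_iff[OF \<phi>_inj] by simp_all
    then have "\<bar>bern_variance (u j) - bern_variance (u k)\<bar> < sqrt n"
      and "\<tau>\<^sub>1 + \<tau>\<^sub>2 + sqrt n \<le> (\<Sum>i<n. (u j ! i - u k ! i)\<^sup>2)"
      using variance dist unfolding \<tau>_sum u_def by blast+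
    then have "bern_set (u j) (decoding_set (u k) \<tau>\<^sub>1) \<le> n / (4 * \<tau>\<^sub>2\<^sup>2)"
      using u jk \<tau> by (intro bern_set_decoding_set_other_le) auto
    then show "bern_set (u j) (decoding_set (u k) \<tau>\<^sub>1) \<le> l2"
      using \<tau>(4) by simp
  qed
  then show ?thesis
    by blast
qed

section \<open>Codes on a grid\<close>

definition hamming_dist :: "'a list \<Rightarrow> 'a list \<Rightarrow> nat" where
  "hamming_dist xs ys = card {i. i < length xs \<and> xs ! i \<noteq> ys ! i}"

lemma hamming_dist_commute: "length xs = length ys \<Longrightarrow> hamming_dist xs ys = hamming_dist ys xs"
  unfolding hamming_dist_def by (rule arg_cong[where f = card]) auto

lemma inj_on_mismatch_restrict:
  "inj_on (\<lambda>w'. ({i. i < n \<and> w ! i \<noteq> w' ! i}, restrict (nth w') {i. i < n \<and> w ! i \<noteq> w' ! i}))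
     {w'. length w' = n}"
proof (rule inj_onI)
  fix w1 w2 :: "'a list"
  let ?M = "\<lambda>w'. {i. i < n \<and> w ! i \<noteq> w' ! i}"
  assume "w1 \<in> {w'. length w' = n}" "w2 \<in> {w'. length w' = n}"
    and eq: "(?M w1, restrict (nth w1) (?M w1)) = (?M w2, restrict (nth w2) (?M w2))"
  from \<open>w1 \<in> _\<close> \<open>w2 \<in> _\<close> have len: "length w1 = n" "length w2 = n"
    by simp_all
  from eq have M: "?M w1 = ?M w2" and restr: "restrict (nth w1) (?M w1) = restrict (nth w2) (?M w2)"
    unfolding prod.inject by blast+
  have "w1 ! i = w2 ! i" if "i < n" for i
  proof (cases "i \<in> ?M w1")
    case True
    moreover from True have "i \<in> ?M w2"
      using M by simp
    ultimately show ?thesis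
      using fun_cong[OF restr, of i] by simp
  next
    case False
    moreover from False have "i \<notin> ?M w2"
      using M by simp
    ultimately show ?thesis
      using that by simp
  qed
  with len show "w1 = w2"
    by (intro nth_equalityI) auto
qed

lemma card_hamming_ball_le:
  assumes A: "finite A" "A \<noteq> {}" and "length w = n"
  shows "card {w'. set w' \<subseteq> A \<and> length w' = n \<and> hamming_dist w w' < D} \<le> 2 ^ n * card A ^ D"
proof -
  let ?B = "{w'. set w' \<subseteq> A \<and> length w' = n \<and> hamming_dist w w' < D}"
  let ?S = "{S. S \<subseteq> {..<n} \<and> card S < D}"
  define M where "M w' = {i. i < n \<and> w ! i \<noteq> w' ! i}" for w'
  define enc where "enc w' = (M w', restrict (nth w') (M w'))" for w'
  have "inj_on enc ?B"
    using inj_on_mismatch_restrict[of n w] unfolding enc_def M_def by (rule inj_on_subset) auto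
  moreover have "enc w' \<in> Sigma ?S (\<lambda>S. S \<rightarrow>\<^sub>E A)" if "w' \<in> ?B" for w'
  proof -
    have "card (M w') < D"
      using that \<open>length w = n\<close> by (simp add: hamming_dist_def M_def)
    moreover have "restrict (nth w') (M w') \<in> M w' \<rightarrow>\<^sub>E A"
      using that nth_mem[of _ w'] by (fastforce simp: M_def)
    moreover have "M w' \<subseteq> {..<n}"
      by (auto simp: M_def)
    ultimately show ?thesis
      unfolding enc_def by (intro SigmaI) simp_all
  qed
  moreover have fin_S: "finite ?S"
    by (rule finite_subset[of _ "Pow {..<n}"]) auto
  moreover have fin_PiE: "finite (S \<rightarrow>\<^sub>E A)" if "S \<in> ?S" for S
    using that A(1) by (intro finite_PiE) (auto dest: finite_subset)
  ultimately have "card ?B \<le> card (Sigma ?S (\<lambda>S. S \<rightarrow>\<^sub>E A))"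
    by (intro card_inj_on_le finite_SigmaI) blast+
  also have "\<dots> = (\<Sum>S\<in>?S. card (S \<rightarrow>\<^sub>E A))"
    using fin_S fin_PiE by (simp add: card_SigmaI)
  also have "\<dots> = (\<Sum>S\<in>?S. card A ^ card S)"
  proof (rule sum.cong)
    fix S assume "S \<in> ?S"
    then have "finite S"
      using finite_subset[of S "{..<n}"] by simp
    then show "card (S \<rightarrow>\<^sub>E A) = card A ^ card S"
      by (simp add: card_PiE)
  qed simp
  also have "\<dots> \<le> (\<Sum>S\<in>?S. card A ^ D)"
    using A by (intro sum_mono power_increasing) (auto simp: Suc_le_eq card_gt_0_iff)
  also have "\<dots> = card ?S * card A ^ D"
    by simp
  also have "\<dots> \<le> 2 ^ n * card A ^ D"
  proof (rule mult_right_mono)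
    have "card ?S \<le> card (Pow {..<n})"
      by (rule card_mono) auto
    then show "card ?S \<le> 2 ^ n"
      by (simp add: card_Pow)
  qed simp
  finally show ?thesis .
qed

lemma exists_large_independent_subset:
  assumes "finite X" and sym: "\<And>x y. x \<in> X \<Longrightarrow> y \<in> X \<Longrightarrow> R x y \<Longrightarrow> R y x"
    and deg: "\<And>x. x \<in> X \<Longrightarrow> card {y \<in> X. R x y} \<le> B"
  shows "\<exists>Y\<subseteq>X. (\<forall>x\<in>Y. \<forall>y\<in>Y. x \<noteq> y \<longrightarrow> \<not> R x y) \<and> card X \<le> (B + 1) * card Y"
proof -
  define indep where "indep Y \<longleftrightarrow> Y \<subseteq> X \<and> (\<forall>x\<in>Y. \<forall>y\<in>Y. x \<noteq> y \<longrightarrow> \<not> R x y)" for Y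
  have "finite {Y. indep Y}"
    by (rule finite_subset[of _ "Pow X"]) (auto simp: indep_def \<open>finite X\<close>)
  moreover have "indep {}"
    by (simp add: indep_def)
  ultimately obtain Y where "indep Y" and maximal: "\<And>Z. indep Z \<Longrightarrow> Y \<subseteq> Z \<Longrightarrow> Y = Z"
    using finite_has_maximal[of "{Y. indep Y}"] by blast
  then have "finite Y"
    using \<open>finite X\<close> by (auto simp: indep_def intro: finite_subset)
  have "X \<subseteq> (\<Union>y\<in>Y. insert y {z \<in> X. R y z})"
  proof
    fix x assume "x \<in> X"
    show "x \<in> (\<Union>y\<in>Y. insert y {z \<in> X. R y z})"
    proof (rule ccontr)
      assume "x \<notin> (\<Union>y\<in>Y. insert y {z \<in> X. R y z})"
      then have "x \<notin> Y" and not_Ryx: "\<And>y. y \<in> Y \<Longrightarrow> \<not> R y x"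
        using \<open>x \<in> X\<close> by auto
      have not_Rxy: "\<not> R x y" if "y \<in> Y" for y
        using not_Ryx[OF that] sym[of x y] \<open>x \<in> X\<close> that \<open>indep Y\<close> by (auto simp: indep_def)
      have "indep (insert x Y)"
        using \<open>indep Y\<close> \<open>x \<in> X\<close> not_Ryx not_Rxy by (auto simp: indep_def)
      then show False
        using maximal[of "insert x Y"] \<open>x \<notin> Y\<close> by auto
    qed
  qed
  then have "card X \<le> card (\<Union>y\<in>Y. insert y {z \<in> X. R y z})"
    using \<open>finite X\<close> \<open>finite Y\<close> by (intro card_mono) auto
  also have "\<dots> \<le> (\<Sum>y\<in>Y. card (insert y {z \<in> X. R y z}))"
    using \<open>finite Y\<close> by (rule card_UN_le)
  also have "\<dots> \<le> (\<Sum>y\<in>Y. B + 1)"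
  proof (rule sum_mono)
    fix y assume "y \<in> Y"
    then have "card {z \<in> X. R y z} \<le> B"
      using deg \<open>indep Y\<close> by (auto simp: indep_def)
    then show "card (insert y {z \<in> X. R y z}) \<le> B + 1"
      using \<open>finite X\<close> by (simp add: card_insert_if)
  qed
  finally show ?thesis
    using \<open>indep Y\<close> by (auto simp: indep_def mult.commute)
qed

lemma exists_large_fiber:
  fixes f :: "'a \<Rightarrow> nat"
  assumes "finite X" and "\<And>x. x \<in> X \<Longrightarrow> f x \<le> m"
  shows "\<exists>t. card X \<le> (m + 1) * card {x \<in> X. f x = t}"
proof (rule ccontr)
  assume "\<nexists>t. card X \<le> (m + 1) * card {x \<in> X. f x = t}"
  then have small: "(m + 1) * card {x \<in> X. f x = t} < card X" for t
    by (simp add: not_le)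
  have "card X = card (\<Union>t\<in>{..m}. {x \<in> X. f x = t})"
    using assms(2) by (intro arg_cong[where f = card]) auto
  also have "\<dots> \<le> (\<Sum>t\<in>{..m}. card {x \<in> X. f x = t})"
    by (rule card_UN_le) simp
  finally have "(m + 1) * card X \<le> (m + 1) * (\<Sum>t\<in>{..m}. card {x \<in> X. f x = t})"
    by (rule mult_le_mono2)
  also have "\<dots> = (\<Sum>t\<in>{..m}. (m + 1) * card {x \<in> X. f x = t})"
    by (rule sum_distrib_left)
  also have "\<dots> < (\<Sum>t\<in>{..m}. card X)"
    using small by (intro sum_strict_mono) auto
  finally show False
    by simp
qed

lemma exists_large_hamming_code_in_fiber:
  fixes f :: "'a list \<Rightarrow> nat"
  assumes A: "finite A" "A \<noteq> {}"
    and f: "\<And>w. set w \<subseteq> A \<Longrightarrow> length w = n \<Longrightarrow> f w \<le> m"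
  obtains Y where "Y \<subseteq> {w. set w \<subseteq> A \<and> length w = n}"
    and "\<And>w w'. w \<in> Y \<Longrightarrow> w' \<in> Y \<Longrightarrow> f w = f w'"
    and "\<And>w w'. w \<in> Y \<Longrightarrow> w' \<in> Y \<Longrightarrow> w \<noteq> w' \<Longrightarrow> D \<le> hamming_dist w w'"
    and "card A ^ n \<le> (m + 1) * (2 ^ n * card A ^ D + 1) * card Y"
proof -
  let ?X = "{w. set w \<subseteq> A \<and> length w = n}"
  have "finite ?X"
    using A(1) by (rule finite_lists_length_eq)
  then obtain t where t: "card ?X \<le> (m + 1) * card {w \<in> ?X. f w = t}"
    using exists_large_fiber[of ?X f m] f by blast
  let ?F = "{w \<in> ?X. f w = t}"
  define R where "R w w' \<longleftrightarrow> w \<noteq> w' \<and> hamming_dist w w' < D" for w w' :: "'a list"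
  have fin_F: "finite ?F"
    using \<open>finite ?X\<close> by (rule finite_subset[rotated]) auto
  have R_sym: "R w' w" if "w \<in> ?F" "w' \<in> ?F" "R w w'" for w w'
    using that hamming_dist_commute[of w w'] by (auto simp: R_def)
  have R_deg: "card {w' \<in> ?F. R w w'} \<le> 2 ^ n * card A ^ D" if "w \<in> ?F" for w
  proof -
    have "card {w' \<in> ?F. R w w'} \<le> card {w'. set w' \<subseteq> A \<and> length w' = n \<and> hamming_dist w w' < D}"
      by (intro card_mono finite_subset[OF _ finite_lists_length_eq[OF A(1), of n]]) (auto simp: R_def)
    also have "\<dots> \<le> 2 ^ n * card A ^ D"
      using that by (intro card_hamming_ball_le A) simp
    finally show ?thesis .
  qed
  obtain Y where Y: "Y \<subseteq> ?F" "\<forall>w\<in>Y. \<forall>w'\<in>Y. w \<noteq> w' \<longrightarrow> \<not> R w w'"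
    and card_Y: "card ?F \<le> (2 ^ n * card A ^ D + 1) * card Y"
    using exists_large_independent_subset[where R = R, OF fin_F R_sym R_deg] by blast
  have "card A ^ n = card ?X"
    using A(1) by (simp add: card_lists_length_eq)
  also have "\<dots> \<le> (m + 1) * card ?F"
    by (rule t)
  also have "\<dots> \<le> (m + 1) * ((2 ^ n * card A ^ D + 1) * card Y)"
    using card_Y by (rule mult_le_mono2)
  finally have count: "card A ^ n \<le> (m + 1) * (2 ^ n * card A ^ D + 1) * card Y"
    by (simp only: mult.assoc)
  have fiber: "f w = f w'" if "w \<in> Y" "w' \<in> Y" for w w'
  proof -
    have "f w = t" "f w' = t"
      using that Y(1) by auto
    then show ?thesis
      by simp
  qed
  have far: "D \<le> hamming_dist w w'" if "w \<in> Y" "w' \<in> Y" "w \<noteq> w'" for w w'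
    using that Y(2) by (auto simp: R_def not_less)
  have "Y \<subseteq> ?X"
    using Y(1) by blast
  from this fiber far count show thesis
    by (rule that)
qed

definition grid_point :: "real \<Rightarrow> real \<Rightarrow> nat \<Rightarrow> nat \<Rightarrow> real" where
  "grid_point a b q k = a + (b - a) * k / q"

lemma grid_point_in_interval:
  assumes "a \<le> b" "k \<le> q"
  shows "grid_point a b q k \<in> {a..b}"
proof -
  have "real k / q \<le> 1"
    using assms(2) by (cases "q = 0") (simp_all add: divide_le_eq_1_pos)
  then have "0 \<le> (b - a) * (real k / q)" "(b - a) * (real k / q) \<le> (b - a) * 1"
    using assms(1) by (intro mult_nonneg_nonneg mult_left_mono; simp)+
  then show ?thesis
    by (simp add: grid_point_def)
qed

lemma grid_point_diff: "grid_point a b q k - grid_point a b q k' = (b - a) / q * (real k - real k')"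
  by (cases "q = 0") (simp_all add: grid_point_def field_simps)

lemma grid_point_sq_dist_ge:
  fixes q D :: nat
  assumes "length ws = n" "length ws' = n" and "D \<le> hamming_dist ws ws'"
  shows "D * ((b - a) / q)\<^sup>2 \<le> (\<Sum>i<n. (grid_point a b q (ws ! i) - grid_point a b q (ws' ! i))\<^sup>2)"
proof -
  let ?S = "{i. i < n \<and> ws ! i \<noteq> ws' ! i}"
  have step: "((b - a) / q)\<^sup>2 \<le> (grid_point a b q k - grid_point a b q k')\<^sup>2"
    if "k \<noteq> k'" for k k' :: nat
  proof -
    have "1 \<le> \<bar>real k - real k'\<bar>"
      using that by linarith
    then have "1 \<le> (real k - real k')\<^sup>2"
      by (metis abs_le_square_iff abs_one one_power2)
    then have "((b - a) / q)\<^sup>2 * 1 \<le> ((b - a) / q)\<^sup>2 * (real k - real k')\<^sup>2"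
      by (intro mult_left_mono) auto
    then show ?thesis
      unfolding grid_point_diff power_mult_distrib by simp
  qed
  have "D * ((b - a) / q)\<^sup>2 \<le> hamming_dist ws ws' * ((b - a) / q)\<^sup>2"
    using assms(3) by (intro mult_right_mono) simp_all
  also have "\<dots> = (\<Sum>i\<in>?S. ((b - a) / q)\<^sup>2)"
    using assms(1) by (simp add: hamming_dist_def)
  also have "\<dots> \<le> (\<Sum>i\<in>?S. (grid_point a b q (ws ! i) - grid_point a b q (ws' ! i))\<^sup>2)"
    using step by (intro sum_mono) auto
  also have "\<dots> \<le> (\<Sum>i<n. (grid_point a b q (ws ! i) - grid_point a b q (ws' ! i))\<^sup>2)"
    by (intro sum_mono2) auto
  finally show ?thesis .
qed

lemma nat_floor_bern_variance_le:
  assumes "set x \<subseteq> {0..1}" and "1 \<le> length x"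
  shows "nat \<lfloor>bern_variance x / sqrt (length x)\<rfloor> \<le> length x"
proof -
  have "bern_variance x / sqrt (length x) \<le> length x / 1"
    using bern_variance_bounds[OF assms(1)] assms(2) by (intro frac_le) auto
  then show ?thesis
    by linarith
qed

lemma exists_DI_code_on_grid:
  fixes q D :: nat
  assumes ab: "0 \<le> a" "a < b" "b \<le> 1" and l: "0 < l1" "0 < l2" and "1 \<le> n"
    and D: "(1 + 1 / (2 * sqrt l1) + 1 / (2 * sqrt l2)) * sqrt n \<le> D * ((b - a) / q)\<^sup>2"
  shows "\<exists>N u E. is_DI_code a b n N l1 l2 u E \<and> (q + 1) ^ n \<le> (n + 1) * (2 ^ n * (q + 1) ^ D + 1) * N"
proof -
  let ?X = "{ws. set ws \<subseteq> {0..q} \<and> length ws = n}"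
  define c where "c ws = map (grid_point a b q) ws" for ws
  define bucket where "bucket ws = nat \<lfloor>bern_variance (c ws) / sqrt n\<rfloor>" for ws
  have c: "length (c ws) = n" "set (c ws) \<subseteq> {a..b}" if "ws \<in> ?X" for ws
    using that ab by (auto simp: c_def intro!: grid_point_in_interval)
  have "{a..b} \<subseteq> {0..1 :: real}"
    using ab by simp
  then have c_unit: "set (c ws) \<subseteq> {0..1}" if "ws \<in> ?X" for ws
    using c(2)[OF that] by (rule subset_trans[rotated])
  have bucket_le: "bucket ws \<le> n" if "set ws \<subseteq> {0..q}" "length ws = n" for ws
    using nat_floor_bern_variance_le[OF c_unit] c(1) that \<open>1 \<le> n\<close> by (simp add: bucket_def)
  obtain Y where Y: "Y \<subseteq> ?X"
    and same_bucket: "\<And>w w'. w \<in> Y \<Longrightarrow> w' \<in> Y \<Longrightarrow> bucket w = bucket w'"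
    and far: "\<And>w w'. w \<in> Y \<Longrightarrow> w' \<in> Y \<Longrightarrow> w \<noteq> w' \<Longrightarrow> D \<le> hamming_dist w w'"
    and card_Y: "card {0..q} ^ n \<le> (n + 1) * (2 ^ n * card {0..q} ^ D + 1) * card Y"
    by (rule exists_large_hamming_code_in_fiber[where A = "{0..q}" and f = bucket and m = n and D = D,
          OF finite_atLeastAtMost _ bucket_le]) auto
  have "\<exists>u E. is_DI_code a b n (card Y) l1 l2 u E"
  proof (rule DI_code_of_separated_family[where c = c, OF _ \<open>1 \<le> n\<close> l ab(1,3)])
    show "finite Y"
      using Y by (rule finite_subset) (simp add: finite_lists_length_eq)
    fix w w' assume w: "w \<in> Y" and w': "w' \<in> Y"
    then have "w \<in> ?X" "w' \<in> ?X"
      using Y by blast+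
    then show "length (c w) = n \<and> set (c w) \<subseteq> {a..b}"
      using c by blast
    have "nat \<lfloor>bern_variance (c w) / sqrt n\<rfloor> = nat \<lfloor>bern_variance (c w') / sqrt n\<rfloor>"
      using same_bucket[OF w w'] by (simp only: bucket_def)
    then show "\<bar>bern_variance (c w) - bern_variance (c w')\<bar> < sqrt n"
      using bern_variance_bounds[OF c_unit] \<open>w \<in> ?X\<close> \<open>w' \<in> ?X\<close> \<open>1 \<le> n\<close>
      by (intro nat_floor_divide_eq_imp_dist_less) simp_all
    assume "w \<noteq> w'"
    then have "D * ((b - a) / q)\<^sup>2 \<le> (\<Sum>k<n. (c w ! k - c w' ! k)\<^sup>2)"
      using grid_point_sq_dist_ge[of w n w' D, where a = a and b = b and q = q] far[OF w w']
        \<open>w \<in> ?X\<close> \<open>w' \<in> ?X\<close> by (simp add: c_def)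
    then show "(1 + 1 / (2 * sqrt l1) + 1 / (2 * sqrt l2)) * sqrt n \<le> (\<Sum>k<n. (c w ! k - c w' ! k)\<^sup>2)"
      using D by linarith
  qed
  then obtain u E where "is_DI_code a b n (card Y) l1 l2 u E"
    by blast
  moreover have "(q + 1) ^ n \<le> (n + 1) * (2 ^ n * (q + 1) ^ D + 1) * card Y"
    using card_Y by simp
  ultimately show ?thesis
    by blast
qed

lemma ln_code_size_ge:
  fixes q D N n :: nat
  assumes count: "(q + 1) ^ n \<le> (n + 1) * (2 ^ n * (q + 1) ^ D + 1) * N"
  shows "1 \<le> N" and "(real n - D) * ln (q + 1) - (n + 1) * ln 2 - ln (n + 1) \<le> ln N"
proof -
  define Q where "Q = real q + 1"
  have "1 \<le> Q"
    by (simp add: Q_def)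
  have "real ((q + 1) ^ n) \<le> real ((n + 1) * (2 ^ n * (q + 1) ^ D + 1) * N)"
    using count by (simp only: of_nat_le_iff)
  then have count_real: "Q ^ n \<le> (n + 1) * (2 ^ n * Q ^ D + 1) * N"
    by (simp add: Q_def algebra_simps)
  show "1 \<le> N"
    using count by (cases N) auto
  then have "0 < real N"
    by simp
  have "(1 :: real) \<le> 2 ^ n" "1 \<le> Q ^ D"
    using \<open>1 \<le> Q\<close> by (simp_all add: one_le_power)
  then have "1 * 1 \<le> 2 ^ n * Q ^ D"
    by (intro mult_mono) auto
  then have "2 ^ n * Q ^ D + 1 \<le> 2 * 2 ^ n * Q ^ D"
    by linarith
  then have "(n + 1) * (2 ^ n * Q ^ D + 1) * N \<le> (n + 1) * (2 * 2 ^ n * Q ^ D) * N"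
    by (intro mult_right_mono mult_left_mono) auto
  with count_real have "Q ^ n \<le> (n + 1) * (2 * 2 ^ n * Q ^ D) * N"
    by (rule order_trans)
  moreover have "0 < (n + 1) * (2 * 2 ^ n * Q ^ D) * N"
    using \<open>1 \<le> Q\<close> \<open>0 < real N\<close> by (intro mult_pos_pos) auto
  ultimately have "ln (Q ^ n) \<le> ln ((n + 1) * (2 * 2 ^ n * Q ^ D) * N)"
    using \<open>1 \<le> Q\<close> by (subst ln_le_cancel_iff) auto
  then have "n * ln Q \<le> ln (n + 1) + (ln 2 + n * ln 2 + D * ln Q) + ln N"
    using \<open>1 \<le> Q\<close> \<open>0 < real N\<close> by (simp add: ln_mult_pos ln_realpow)
  then show "(real n - D) * ln (q + 1) - (n + 1) * ln 2 - ln (n + 1) \<le> ln N"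
    by (simp add: Q_def algebra_simps)
qed

(* With q <= c n^(1/4) the Hamming distance D that makes grid words K sqrt n apart in squared
   Euclidean distance is about K sqrt n q^2 / d^2 <= eps n. *)
lemma exists_grid_parameters:
  fixes n :: nat and K \<epsilon> d :: real
  defines "c \<equiv> d * sqrt (\<epsilon> / K)"
  assumes "0 < K" "0 < \<epsilon>" "0 < d" and c_large: "1 \<le> c * sqrt (sqrt n)" and "1 \<le> \<epsilon> * n"
  obtains q D :: nat where "1 \<le> q" "c * sqrt (sqrt n) \<le> q + 1" "D \<le> 2 * \<epsilon> * n"
    "K * sqrt n \<le> D * (d / q)\<^sup>2"
proof -
  define q where "q = nat \<lfloor>c * sqrt (sqrt n)\<rfloor>"
  define y where "y = K * sqrt n * (real q)\<^sup>2 / d\<^sup>2"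
  define D where "D = nat \<lceil>y\<rceil>"
  have "1 \<le> q" "real q \<le> c * sqrt (sqrt n)" "c * sqrt (sqrt n) \<le> q + 1"
    using c_large unfolding q_def by linarith+
  have "0 \<le> y"
    using \<open>0 < K\<close> by (simp add: y_def)
  then have "y \<le> D" "D \<le> y + 1"
    unfolding D_def by linarith+
  have "(real q)\<^sup>2 \<le> (c * sqrt (sqrt n))\<^sup>2"
    using \<open>real q \<le> c * sqrt (sqrt n)\<close> by (intro power_mono) auto
  also have "\<dots> = d\<^sup>2 * \<epsilon> / K * sqrt n"
    using \<open>0 < K\<close> \<open>0 < \<epsilon>\<close> by (simp add: c_def power_mult_distrib real_sqrt_pow2)
  finally have "y \<le> K * sqrt n * (d\<^sup>2 * \<epsilon> / K * sqrt n) / d\<^sup>2"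
    unfolding y_def using \<open>0 < K\<close> by (intro divide_right_mono mult_left_mono) auto
  also have "\<dots> = \<epsilon> * n"
    using \<open>0 < K\<close> \<open>0 < d\<close> by simp
  finally have "D \<le> 2 * \<epsilon> * n"
    using \<open>D \<le> y + 1\<close> \<open>1 \<le> \<epsilon> * n\<close> by linarith
  moreover have "K * sqrt n \<le> D * (d / q)\<^sup>2"
  proof -
    have "K * sqrt n = y * (d / q)\<^sup>2"
      using \<open>1 \<le> q\<close> \<open>0 < d\<close> by (simp add: y_def field_simps)
    also have "\<dots> \<le> D * (d / q)\<^sup>2"
      using \<open>y \<le> D\<close> by (intro mult_right_mono) auto
    finally show ?thesis .
  qed
  ultimately show thesis
    using \<open>1 \<le> q\<close> \<open>c * sqrt (sqrt n) \<le> q + 1\<close> by (intro that) auto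
qed

lemma exists_DI_code_ln_size_ge:
  fixes n :: nat and a b l1 l2 \<epsilon> :: real
  defines "c \<equiv> (b - a) * sqrt (\<epsilon> / (1 + 1 / (2 * sqrt l1) + 1 / (2 * sqrt l2)))"
  assumes ab: "0 \<le> a" "a < b" "b \<le> 1" and l: "0 < l1" "0 < l2"
    and \<epsilon>: "0 < \<epsilon>" "2 * \<epsilon> \<le> 1" and "1 \<le> n"
    and c_large: "1 \<le> c * sqrt (sqrt n)" and "1 \<le> \<epsilon> * n"
  obtains N u E where "is_DI_code a b n N l1 l2 u E" and "1 \<le> N"
    and "(1 - 2 * \<epsilon>) * n * (ln c + ln n / 4) - ((n + 1) * ln 2 + ln (n + 1)) \<le> ln N"
proof -
  define K where "K = 1 + 1 / (2 * sqrt l1) + 1 / (2 * sqrt l2)"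
  have "0 < K"
    using l by (simp add: K_def add_pos_pos)
  obtain q D :: nat where "1 \<le> q" "c * sqrt (sqrt n) \<le> q + 1" "D \<le> 2 * \<epsilon> * n"
    and "K * sqrt n \<le> D * ((b - a) / q)\<^sup>2"
    using exists_grid_parameters[of K \<epsilon> "b - a" n] \<open>0 < K\<close> \<epsilon> ab c_large \<open>1 \<le> \<epsilon> * n\<close>
    unfolding c_def K_def by auto
  then obtain N u E where code: "is_DI_code a b n N l1 l2 u E"
    and count: "(q + 1) ^ n \<le> (n + 1) * (2 ^ n * (q + 1) ^ D + 1) * N"
    using exists_DI_code_on_grid[OF ab l \<open>1 \<le> n\<close>, of D q] unfolding K_def by auto
  have "0 < c"
    using ab l \<epsilon> by (simp add: c_def add_pos_pos)
  have "ln c + ln n / 4 = ln (c * sqrt (sqrt n))"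
    using \<open>0 < c\<close> \<open>1 \<le> n\<close> by (simp add: ln_mult_pos ln_sqrt)
  also have "\<dots> \<le> ln (q + 1)"
    using \<open>c * sqrt (sqrt n) \<le> q + 1\<close> c_large by simp
  finally have "(1 - 2 * \<epsilon>) * n * (ln c + ln n / 4) \<le> (1 - 2 * \<epsilon>) * n * ln (q + 1)"
    using \<epsilon> by (intro mult_left_mono) auto
  also have "\<dots> \<le> (real n - D) * ln (q + 1)"
    using \<open>D \<le> 2 * \<epsilon> * n\<close> by (intro mult_right_mono) (auto simp: algebra_simps)
  finally have "(1 - 2 * \<epsilon>) * n * (ln c + ln n / 4) - ((n + 1) * ln 2 + ln (n + 1)) \<le> ln N"
    using ln_code_size_ge(2)[OF count] by linarith
  with code ln_code_size_ge(1)[OF count] show thesis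
    by (rule that)
qed

lemma DI_rate_ge_grid_bound:
  fixes n :: nat and a b l1 l2 \<epsilon> :: real
  defines "c \<equiv> (b - a) * sqrt (\<epsilon> / (1 + 1 / (2 * sqrt l1) + 1 / (2 * sqrt l2)))"
  assumes ab: "0 \<le> a" "a < b" "b \<le> 1" and l: "0 < l1" "0 < l2"
    and \<epsilon>: "0 < \<epsilon>" "2 * \<epsilon> \<le> 1" and "2 \<le> n"
    and c_large: "1 \<le> c * sqrt (sqrt n)" and "1 \<le> \<epsilon> * n"
  shows "ereal ((1 - 2 * \<epsilon>) / 4 + (1 - 2 * \<epsilon>) * ln c / ln n - ((n + 1) * ln 2 + ln (n + 1)) / (n * ln n))
      \<le> DI_rate a b l1 l2 n"
proof -
  obtain N u E where code: "is_DI_code a b n N l1 l2 u E" and "1 \<le> N"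
    and ln_N: "(1 - 2 * \<epsilon>) * n * (ln c + ln n / 4) - ((n + 1) * ln 2 + ln (n + 1)) \<le> ln N"
    using exists_DI_code_ln_size_ge[OF ab l \<epsilon> _ c_large[unfolded c_def] \<open>1 \<le> \<epsilon> * n\<close>] \<open>2 \<le> n\<close>
    unfolding c_def by auto
  have "0 < ln n"
    using \<open>2 \<le> n\<close> by simp
  have "(1 - 2 * \<epsilon>) / 4 + (1 - 2 * \<epsilon>) * ln c / ln n - ((n + 1) * ln 2 + ln (n + 1)) / (n * ln n)
      = ((1 - 2 * \<epsilon>) * n * (ln c + ln n / 4) - ((n + 1) * ln 2 + ln (n + 1))) / (n * ln n)"
    using \<open>0 < ln n\<close> \<open>2 \<le> n\<close> by (simp add: field_simps)
  also have "\<dots> \<le> ln N / (n * ln n)"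
    using ln_N \<open>0 < ln n\<close> by (intro divide_right_mono) auto
  finally have "ereal ((1 - 2 * \<epsilon>) / 4 + (1 - 2 * \<epsilon>) * ln c / ln n - ((n + 1) * ln 2 + ln (n + 1)) / (n * ln n))
      \<le> ereal (ln N / (n * ln n))"
    by simp
  also have "\<dots> \<le> DI_rate a b l1 l2 n"
    using DI_rate_ge[OF \<open>2 \<le> n\<close> code_size_le_N_DI[OF code]] \<open>1 \<le> N\<close> by simp
  finally show ?thesis .
qed

lemma liminf_DI_rate_ge:
  assumes ab: "0 \<le> a" "a < b" "b \<le> 1" and l: "0 < l1" "0 < l2"
  shows "ereal (1 / 4) \<le> liminf (DI_rate a b l1 l2)"
proof -
  have bound: "ereal ((1 - 2 * \<epsilon>) / 4) \<le> liminf (DI_rate a b l1 l2)"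
    if \<epsilon>: "0 < \<epsilon>" "2 * \<epsilon> \<le> 1" for \<epsilon>
  proof -
    define c where "c = (b - a) * sqrt (\<epsilon> / (1 + 1 / (2 * sqrt l1) + 1 / (2 * sqrt l2)))"
    define g where "g n = (1 - 2 * \<epsilon>) / 4 + (1 - 2 * \<epsilon>) * ln c / ln n
      - ((n + 1) * ln 2 + ln (n + 1)) / (n * ln n)" for n :: nat
    have "0 < c"
      using ab l \<epsilon> by (simp add: c_def add_pos_pos)
    then have "eventually (\<lambda>n. 2 \<le> n \<and> 1 \<le> c * sqrt (sqrt n) \<and> 1 \<le> \<epsilon> * n) sequentially"
      using \<open>0 < \<epsilon>\<close> by (intro eventually_conj eventually_ge_at_top) real_asymp+
    then have "eventually (\<lambda>n. ereal (g n) \<le> DI_rate a b l1 l2 n) sequentially"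
    proof eventually_elim
      case (elim n)
      then have "2 \<le> n" "1 \<le> c * sqrt (sqrt n)" "1 \<le> \<epsilon> * n"
        by auto
      then show ?case
        unfolding g_def c_def by (rule DI_rate_ge_grid_bound[OF ab l \<epsilon>])
    qed
    then have "liminf (\<lambda>n. ereal (g n)) \<le> liminf (DI_rate a b l1 l2)"
      by (rule Liminf_mono)
    moreover have "liminf (\<lambda>n. ereal (g n)) = ereal ((1 - 2 * \<epsilon>) / 4)"
      by (intro lim_imp_Liminf) (simp_all add: g_def, real_asymp)
    ultimately show ?thesis
      by simp
  qed
  have "((\<lambda>\<epsilon>. ereal ((1 - 2 * \<epsilon>) / 4)) \<longlongrightarrow> ereal (1 / 4)) (at_right 0)"
    by (simp only: lim_ereal) real_asymp
  moreover have "eventually (\<lambda>\<epsilon>. \<epsilon> \<in> {0<..<1 / 2}) (at_right (0 :: real))"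
    by (rule eventually_at_right_real) simp
  then have "eventually (\<lambda>\<epsilon>. ereal ((1 - 2 * \<epsilon>) / 4) \<le> liminf (DI_rate a b l1 l2)) (at_right 0)"
    by (rule eventually_mono) (auto intro: bound)
  ultimately show ?thesis
    by (rule tendsto_upperbound) simp
qed

theorem corollary1:
  fixes a b l1 l2 :: real
  assumes "0 \<le> a" and "a < b" and "b \<le> 1"
    and "l1 > 0" and "l2 > 0" and "l1 + l2 < 1"
  shows "ereal (1/4) \<le> C_DI_dot a b
       \<and> C_DI_dot a b \<le> limsup (DI_rate a b l1 l2)
       \<and> limsup (DI_rate a b l1 l2) \<le> ereal (1/2)"
proof (intro conjI)
  show "ereal (1/4) \<le> C_DI_dot a b"
    unfolding C_DI_dot_def using liminf_DI_rate_ge[OF assms(1-3)] by (auto intro!: INF_greatest)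
  have "C_DI_dot a b \<le> (INF l2'\<in>{0<..}. liminf (DI_rate a b l1 l2'))"
    unfolding C_DI_dot_def by (rule INF_lower) (simp add: \<open>l1 > 0\<close>)
  also have "\<dots> \<le> liminf (DI_rate a b l1 l2)"
    by (rule INF_lower) (simp add: \<open>l2 > 0\<close>)
  also have "\<dots> \<le> limsup (DI_rate a b l1 l2)"
    by (rule Liminf_le_Limsup) simp
  finally show "C_DI_dot a b \<le> limsup (DI_rate a b l1 l2)" .
  show "limsup (DI_rate a b l1 l2) \<le> ereal (1/2)"
    using limsup_DI_rate_le assms by simp
qed

end
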